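(* Let $2\le n<\infty$ be an integer and $R=\mathbb{Z}_2\times\cdots\times\mathbb{Z}_2$ ($n$ factors). Then $$\omega(\Gamma'(R))=\chi(\Gamma'(R))=\binom{n}{\lfloor n/2\rfloor}.$$
   Context: All rings are commutative with identity. $W^*(R)$ denotes the set of non-zero non-unit elements of $R$. The cozero-divisor graph $\Gamma'(R)$ is the simple graph with vertex set $W^*(R)$, in which distinct $a,b$ are adjacent iff $a\notin Rb$ and $b\notin Ra$. $\omega(G)$ denotes the clique number and $\chi(G)$ the chromatic number of a graph $G$. *)

theory Defs
  imports "HOL-Analysis.Analysis" "HOL-Library.Z2"
begin

definition nonzero_nonunits :: "'a::comm_ring_1 set" where
  "nonzero_nonunits = {x. x \<noteq> 0 \<and> \<not> x dvd 1}"

definition cozero_adj :: "'a::comm_ring_1 \<Rightarrow> 'a \<Rightarrow> bool" where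
  "cozero_adj a b \<longleftrightarrow> a \<noteq> b \<and> a \<notin> {r * b | r. True} \<and> b \<notin> {r * a | r. True}"

definition is_clique :: "'v set \<Rightarrow> ('v \<Rightarrow> 'v \<Rightarrow> bool) \<Rightarrow> 'v set \<Rightarrow> bool" where
  "is_clique V E C \<longleftrightarrow> C \<subseteq> V \<and> (\<forall>x\<in>C. \<forall>y\<in>C. x \<noteq> y \<longrightarrow> E x y)"

definition clique_number :: "'v set \<Rightarrow> ('v \<Rightarrow> 'v \<Rightarrow> bool) \<Rightarrow> nat" where
  "clique_number V E = Sup {card C | C. finite C \<and> is_clique V E C}"

definition proper_colouring :: "'v set \<Rightarrow> ('v \<Rightarrow> 'v \<Rightarrow> bool) \<Rightarrow> nat \<Rightarrow> ('v \<Rightarrow> nat) \<Rightarrow> bool" where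
  "proper_colouring V E k f \<longleftrightarrow>
     (\<forall>x\<in>V. f x < k) \<and> (\<forall>x\<in>V. \<forall>y\<in>V. x \<noteq> y \<longrightarrow> E x y \<longrightarrow> f x \<noteq> f y)"

definition chromatic_number :: "'v set \<Rightarrow> ('v \<Rightarrow> 'v \<Rightarrow> bool) \<Rightarrow> nat" where
  "chromatic_number V E = (LEAST k. \<exists>f. proper_colouring V E k f)"

end

theory Submission
  imports Defs
begin

(* Identify Z_2^n with the power set of the index set via ones x = {i. x_i = 1}.
   Then a \<in> Rb iff ones a \<subseteq> ones b, so \<Gamma>'(R) is the incomparability graph of the proper
   nonempty subsets.  The middle layer is a clique of size C(n, n div 2), and a symmetric chain
   decomposition of the power set (de Bruijn, Tengbergen, Kruyswijk) has exactly one chain per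
   middle-layer set; colouring every set by its chain is proper because sets on a chain are
   comparable. *)

section \<open>Symmetric chain decompositions\<close>

text \<open>A pair (B, ys) encodes the chain B, B \<union> {y1}, ..., B \<union> set ys; it is
  symmetric in S if it runs from size |B| to size |S| - |B|.\<close>

fun chain_sets :: "'a set \<times> 'a list \<Rightarrow> 'a set set" where
  "chain_sets (B, ys) = (\<lambda>j. B \<union> set (take j ys)) ` {..length ys}"

fun symmetric_chain :: "'a set \<Rightarrow> 'a set \<times> 'a list \<Rightarrow> bool" where
  "symmetric_chain S (B, ys) \<longleftrightarrow> B \<subseteq> S \<and> set ys \<subseteq> S \<and> distinct ys \<and> B \<inter> set ys = {}
     \<and> 2 * card B + length ys = card S"

definition symmetric_chain_decomposition :: "'a set \<Rightarrow> ('a set \<times> 'a list) set \<Rightarrow> bool" where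
  "symmetric_chain_decomposition S C \<longleftrightarrow>
     (\<forall>c\<in>C. symmetric_chain S c) \<and> (\<forall>A. A \<subseteq> S \<longrightarrow> (\<exists>c\<in>C. A \<in> chain_sets c))
     \<and> (\<forall>c\<in>C. \<forall>d\<in>C. c \<noteq> d \<longrightarrow> chain_sets c \<inter> chain_sets d = {})"

lemma chain_sets_comparable:
  assumes "A \<in> chain_sets c" "A' \<in> chain_sets c"
  shows "A \<subseteq> A' \<or> A' \<subseteq> A"
proof -
  obtain B ys i j where "A = B \<union> set (take i ys)" "A' = B \<union> set (take j ys)"
    using assms by (cases c) auto
  then show ?thesis
    using set_take_subset_set_take[of i j ys] set_take_subset_set_take[of j i ys]
    by (cases "i \<le> j") auto
qed

lemma chain_sets_subset:
  assumes "symmetric_chain S c" "A \<in> chain_sets c"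
  shows "A \<subseteq> S"
  using assms by (cases c) (auto dest: in_set_takeD)

lemma chain_sets_extend:
  "chain_sets (B, ys @ [x]) = insert (insert x (B \<union> set ys)) (chain_sets (B, ys))"
  by (auto simp: atMost_Suc image_iff)

lemma chain_sets_shift:
  assumes "ys \<noteq> []"
  shows "chain_sets (insert x B, butlast ys) = insert x ` (\<lambda>j. B \<union> set (take j ys)) ` {..<length ys}"
proof -
  have "{..length (butlast ys)} = {..<length ys}" using assms by (cases ys rule: rev_cases) auto
  moreover have "take j (butlast ys) = take j ys" if "j < length ys" for j
    using that by (simp add: take_butlast)
  ultimately show ?thesis by (auto simp: image_iff)
qed

lemma symmetric_chain_extend:
  assumes "symmetric_chain S (B, ys)" "finite S" "x \<notin> S"
  shows "symmetric_chain (insert x S) (B, ys @ [x])"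
  using assms by auto

lemma symmetric_chain_shift:
  assumes "symmetric_chain S (B, ys)" "finite S" "x \<notin> S" "ys \<noteq> []"
  shows "symmetric_chain (insert x S) (insert x B, butlast ys)"
proof -
  have "finite B" "x \<notin> B" "x \<notin> set ys" using assms(1-3) finite_subset by auto
  moreover have "length ys \<ge> 1" using assms(4) by (cases ys) auto
  ultimately show ?thesis
    using assms by (auto simp: distinct_butlast dest: in_set_butlastD)
qed

lemma Diff_mem_chain_sets_extend:
  assumes "symmetric_chain S (B, ys)" "x \<notin> S" "Z \<in> chain_sets (B, ys @ [x])"
  shows "Z - {x} \<in> chain_sets (B, ys)"
proof -
  have top: "B \<union> set ys \<in> chain_sets (B, ys)" by (auto simp: image_iff intro: bexI[of _ "length ys"])
  show ?thesis
    using assms(3) unfolding chain_sets_extend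
  proof
    assume "Z = insert x (B \<union> set ys)"
    then show ?thesis using assms(1,2) top by auto
  next
    assume "Z \<in> chain_sets (B, ys)"
    moreover from this have "x \<notin> Z" using chain_sets_subset[OF assms(1)] assms(2) by blast
    ultimately show ?thesis by simp
  qed
qed

lemma Diff_mem_chain_sets_shift:
  assumes "symmetric_chain S (B, ys)" "x \<notin> S" "ys \<noteq> []" "Z \<in> chain_sets (insert x B, butlast ys)"
  shows "Z - {x} \<in> chain_sets (B, ys)"
proof -
  obtain j where "j < length ys" "Z = insert x (B \<union> set (take j ys))"
    using assms(4) unfolding chain_sets_shift[OF assms(3)] by blast
  moreover have "x \<notin> B \<union> set (take j ys)" using assms(1,2) by (auto dest: in_set_takeD)
  ultimately show ?thesis by auto
qed

lemma chain_sets_extend_shift_disjoint: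
  assumes "symmetric_chain S (B, ys)" "x \<notin> S" "ys \<noteq> []"
  shows "chain_sets (B, ys @ [x]) \<inter> chain_sets (insert x B, butlast ys) = {}"
proof -
  have proper: "B \<union> set (take j ys) \<noteq> B \<union> set ys" if "j < length ys" for j
  proof -
    have "ys ! j \<notin> set (take j ys)"
      using assms(1) that by (auto simp: in_set_conv_nth nth_eq_iff_index_eq)
    moreover have "ys ! j \<notin> B" "ys ! j \<in> set ys" using assms(1) that by auto
    ultimately show ?thesis by blast
  qed
  have x_notin: "x \<notin> B" "x \<notin> set ys" using assms(1,2) by auto
  show ?thesis
  proof (rule ccontr)
    assume "chain_sets (B, ys @ [x]) \<inter> chain_sets (insert x B, butlast ys) \<noteq> {}"
    then obtain j where j: "j < length ys"
      and "insert x (B \<union> set (take j ys)) \<in> chain_sets (B, ys @ [x])"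
      unfolding chain_sets_shift[OF assms(3)] by blast
    moreover have "x \<notin> Z" if "Z \<in> chain_sets (B, ys)" for Z
      using chain_sets_subset[OF assms(1) that] assms(2) by blast
    ultimately have "insert x (B \<union> set (take j ys)) = insert x (B \<union> set ys)"
      unfolding chain_sets_extend by blast
    then show False
      using proper[OF j] x_notin by (auto simp: insert_ident dest: in_set_takeD)
  qed
qed

text \<open>The step of de Bruijn, Tengbergen and Kruyswijk: a symmetric chain A0 \<subset> ... \<subset> Ak in S
  yields the symmetric chains A0 \<subset> ... \<subset> Ak \<subset> Ak \<union> {x} and A0 \<union> {x} \<subset> ... \<subset> A(k-1) \<union> {x}
  in S \<union> {x}.\<close>

definition insert_chains :: "'a \<Rightarrow> ('a set \<times> 'a list) set \<Rightarrow> ('a set \<times> 'a list) set" where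
  "insert_chains x C =
     (\<lambda>(B, ys). (B, ys @ [x])) ` C \<union> (\<lambda>(B, ys). (insert x B, butlast ys)) ` {(B, ys)\<in>C. ys \<noteq> []}"

lemma insert_chainsE:
  assumes "c' \<in> insert_chains x C"
  obtains B ys where "(B, ys) \<in> C" "c' = (B, ys @ [x])"
    | B ys where "(B, ys) \<in> C" "ys \<noteq> []" "c' = (insert x B, butlast ys)"
  using assms unfolding insert_chains_def by auto

lemma symmetric_chain_insert_chains:
  assumes "\<forall>c\<in>C. symmetric_chain S c" "finite S" "x \<notin> S" "c' \<in> insert_chains x C"
  shows "symmetric_chain (insert x S) c'"
  using assms(4)
proof (cases rule: insert_chainsE)
  case (1 B ys)
  then show ?thesis using symmetric_chain_extend[of S B ys x] assms(1-3) by blast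
next
  case (2 B ys)
  then show ?thesis using symmetric_chain_shift[of S B ys x] assms(1-3) by blast
qed

lemma insert_chains_cover:
  assumes "\<forall>A. A \<subseteq> S \<longrightarrow> (\<exists>c\<in>C. A \<in> chain_sets c)" "A \<subseteq> insert x S"
  shows "\<exists>c'\<in>insert_chains x C. A \<in> chain_sets c'"
proof -
  obtain B ys where c: "(B, ys) \<in> C" "A - {x} \<in> chain_sets (B, ys)"
    using assms by (metis Diff_subset_conv insert_is_Un surj_pair)
  then obtain j where j: "j \<le> length ys" "A - {x} = B \<union> set (take j ys)" by auto
  have E: "(B, ys @ [x]) \<in> insert_chains x C"
    and S: "ys \<noteq> [] \<Longrightarrow> (insert x B, butlast ys) \<in> insert_chains x C"
    using c(1) unfolding insert_chains_def by force+
  have insert_x: "A = insert x (B \<union> set (take j ys))" if "x \<in> A"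
    using insert_Diff[OF that, symmetric] unfolding j(2) .
  consider "x \<notin> A" | "x \<in> A" "j = length ys" | "x \<in> A" "j < length ys" using j(1) by linarith
  then show ?thesis
  proof cases
    case 1
    then have "A - {x} = A" by blast
    with c(2) have "A \<in> chain_sets (B, ys)" by (simp only:)
    then have "A \<in> chain_sets (B, ys @ [x])" unfolding chain_sets_extend by (rule insertI2)
    then show ?thesis using E by (rule bexI)
  next
    case 2
    then have "A = insert x (B \<union> set ys)" using insert_x by simp
    then have "A \<in> chain_sets (B, ys @ [x])" unfolding chain_sets_extend by (simp only: insertI1)
    then show ?thesis using E by (rule bexI)
  next
    case 3
    then have "ys \<noteq> []" "A = insert x (B \<union> set (take j ys))" using insert_x by auto
    then have "A \<in> chain_sets (insert x B, butlast ys)"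
      unfolding chain_sets_shift[OF \<open>ys \<noteq> []\<close>] using 3 by blast
    then show ?thesis using S[OF \<open>ys \<noteq> []\<close>] by (rule bexI)
  qed
qed

lemma Diff_mem_chain_sets_insert_chains:
  assumes "\<forall>c\<in>C. symmetric_chain S c" "x \<notin> S" "c' \<in> insert_chains x C" "Z \<in> chain_sets c'"
  shows "\<exists>c\<in>C. Z - {x} \<in> chain_sets c \<and>
    (c' = (fst c, snd c @ [x]) \<or> snd c \<noteq> [] \<and> c' = (insert x (fst c), butlast (snd c)))"
  using assms(3)
proof (cases rule: insert_chainsE)
  case (1 B ys)
  then have "Z - {x} \<in> chain_sets (B, ys)"
    using Diff_mem_chain_sets_extend[of S B ys x Z] assms by blast
  then show ?thesis using 1 by (intro bexI[of _ "(B, ys)"]) simp_all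
next
  case (2 B ys)
  then have "Z - {x} \<in> chain_sets (B, ys)"
    using Diff_mem_chain_sets_shift[of S B ys x Z] assms by blast
  then show ?thesis using 2 by (intro bexI[of _ "(B, ys)"]) simp_all
qed

lemma insert_chains_disjoint:
  assumes "symmetric_chain_decomposition S C" "x \<notin> S"
    and "c' \<in> insert_chains x C" "d' \<in> insert_chains x C" "c' \<noteq> d'"
  shows "chain_sets c' \<inter> chain_sets d' = {}"
proof -
  have sym: "\<forall>c\<in>C. symmetric_chain S c"
    and disj: "\<And>c d. c \<in> C \<Longrightarrow> d \<in> C \<Longrightarrow> c \<noteq> d \<Longrightarrow> chain_sets c \<inter> chain_sets d = {}"
    using assms(1) unfolding symmetric_chain_decomposition_def by blast+
  show ?thesis
  proof (rule ccontr)
    assume "chain_sets c' \<inter> chain_sets d' \<noteq> {}"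
    then obtain Z where Z: "Z \<in> chain_sets c'" "Z \<in> chain_sets d'" by blast
    obtain c d where "c \<in> C" "d \<in> C" "Z - {x} \<in> chain_sets c \<inter> chain_sets d"
      and c: "c' = (fst c, snd c @ [x]) \<or> snd c \<noteq> [] \<and> c' = (insert x (fst c), butlast (snd c))"
      and d: "d' = (fst d, snd d @ [x]) \<or> snd d \<noteq> [] \<and> d' = (insert x (fst d), butlast (snd d))"
      using Diff_mem_chain_sets_insert_chains[OF sym assms(2,3) Z(1)]
        Diff_mem_chain_sets_insert_chains[OF sym assms(2,4) Z(2)] by blast
    then have "snd c \<noteq> []" and
      "c' = (fst c, snd c @ [x]) \<and> d' = (insert x (fst c), butlast (snd c))
       \<or> d' = (fst c, snd c @ [x]) \<and> c' = (insert x (fst c), butlast (snd c))"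
      using c d \<open>c' \<noteq> d'\<close> disj by blast+
    then have "Z \<in> chain_sets (fst c, snd c @ [x]) \<inter> chain_sets (insert x (fst c), butlast (snd c))"
      using Z by blast
    moreover have "symmetric_chain S (fst c, snd c)" using sym \<open>c \<in> C\<close> by simp
    ultimately show False
      using chain_sets_extend_shift_disjoint[OF _ assms(2) \<open>snd c \<noteq> []\<close>] by blast
  qed
qed

lemma symmetric_chain_decomposition_insert:
  assumes "symmetric_chain_decomposition S C" "finite S" "x \<notin> S"
  shows "symmetric_chain_decomposition (insert x S) (insert_chains x C)"
proof -
  have sym: "\<forall>c\<in>C. symmetric_chain S c" and cover: "\<forall>A. A \<subseteq> S \<longrightarrow> (\<exists>c\<in>C. A \<in> chain_sets c)"
    using assms(1) unfolding symmetric_chain_decomposition_def by blast+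
  show ?thesis
    unfolding symmetric_chain_decomposition_def
  proof (intro conjI ballI allI impI)
    fix c' assume "c' \<in> insert_chains x C"
    then show "symmetric_chain (insert x S) c'" by (rule symmetric_chain_insert_chains[OF sym assms(2,3)])
  next
    fix A assume "A \<subseteq> insert x S"
    then show "\<exists>c'\<in>insert_chains x C. A \<in> chain_sets c'" by (rule insert_chains_cover[OF cover])
  next
    fix c' d' assume "c' \<in> insert_chains x C" "d' \<in> insert_chains x C" "c' \<noteq> d'"
    then show "chain_sets c' \<inter> chain_sets d' = {}" by (rule insert_chains_disjoint[OF assms(1,3)])
  qed
qed

lemma symmetric_chain_decomposition_exists:
  assumes "finite S"
  shows "\<exists>C. symmetric_chain_decomposition S C"
  using assms
proof (induction S rule: finite_induct)
  case empty
  show ?case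
    by (rule exI[of _ "{({}, [])}"]) (simp add: symmetric_chain_decomposition_def)
next
  case (insert x S)
  then obtain C where "symmetric_chain_decomposition S C" by blast
  from symmetric_chain_decomposition_insert[OF this insert(1,2)] show ?case ..
qed

lemma symmetric_chain_meets_middle_layer:
  assumes "finite S" "symmetric_chain S c"
  shows "\<exists>M\<in>chain_sets c. card M = card S div 2"
proof -
  obtain B ys where c: "c = (B, ys)" by fastforce
  define j where "j = card S div 2 - card B"
  have sym: "B \<subseteq> S" "distinct ys" "B \<inter> set ys = {}" "2 * card B + length ys = card S"
    using assms(2) unfolding c by auto
  then have "finite B" "j \<le> length ys" "card B \<le> card S div 2"
    using assms(1) finite_subset unfolding j_def by auto
  moreover have "B \<inter> set (take j ys) = {}" using sym(3) by (auto dest: in_set_takeD)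
  ultimately have "card (B \<union> set (take j ys)) = card S div 2"
    using sym(2) by (simp add: card_Un_disjoint distinct_card j_def)
  then show ?thesis using \<open>j \<le> length ys\<close> unfolding c by auto
qed

text \<open>Colour every set by the middle-layer set on its chain: chains are disjoint, so equal colours
  force a common chain.\<close>

lemma chain_colouring_exists:
  assumes "finite S"
  obtains col :: "'a set \<Rightarrow> nat" where
    "\<And>A. A \<subseteq> S \<Longrightarrow> col A < card S choose (card S div 2)"
    "\<And>A A'. A \<subseteq> S \<Longrightarrow> A' \<subseteq> S \<Longrightarrow> col A = col A' \<Longrightarrow> A \<subseteq> A' \<or> A' \<subseteq> A"
proof -
  obtain C where "symmetric_chain_decomposition S C"
    using symmetric_chain_decomposition_exists[OF assms] ..
  then have sym: "\<And>c. c \<in> C \<Longrightarrow> symmetric_chain S c"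
    and cover: "\<And>A. A \<subseteq> S \<Longrightarrow> \<exists>c\<in>C. A \<in> chain_sets c"
    and disj: "\<And>c d. c \<in> C \<Longrightarrow> d \<in> C \<Longrightarrow> c \<noteq> d \<Longrightarrow> chain_sets c \<inter> chain_sets d = {}"
    unfolding symmetric_chain_decomposition_def by blast+
  define L where "L = {M. M \<subseteq> S \<and> card M = card S div 2}"
  have "card L = card S choose (card S div 2)" unfolding L_def using n_subsets[OF assms] .
  moreover obtain g where g: "bij_betw g L {0..<card L}"
    using ex_bij_betw_finite_nat[of L] assms unfolding L_def by auto
  define chain where "chain A = (SOME c. c \<in> C \<and> A \<in> chain_sets c)" for A :: "'a set"
  define middle where "middle c = (SOME M. M \<in> chain_sets c \<and> card M = card S div 2)"
    for c :: "'a set \<times> 'a list"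
  have chain: "chain A \<in> C \<and> A \<in> chain_sets (chain A)" if "A \<subseteq> S" for A
    unfolding chain_def using someI_ex[OF cover[OF that, unfolded Bex_def]] .
  have middle: "middle c \<in> chain_sets c \<and> middle c \<in> L" if "c \<in> C" for c
  proof -
    have "middle c \<in> chain_sets c \<and> card (middle c) = card S div 2"
      unfolding middle_def
      using someI_ex[OF symmetric_chain_meets_middle_layer[OF assms sym[OF that], unfolded Bex_def]] .
    then show ?thesis using chain_sets_subset[OF sym[OF that]] unfolding L_def by blast
  qed
  show ?thesis
  proof
    fix A assume "A \<subseteq> S"
    then have "middle (chain A) \<in> L" using chain middle by blast
    then have "g (middle (chain A)) \<in> {0..<card L}" by (rule bij_betw_apply[OF g])
    then show "g (middle (chain A)) < card S choose (card S div 2)" using \<open>card L = _\<close> by simp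
  next
    fix A A' assume A: "A \<subseteq> S" and A': "A' \<subseteq> S"
      and "g (middle (chain A)) = g (middle (chain A'))"
    moreover have "middle (chain A) \<in> L" "middle (chain A') \<in> L"
      using chain[OF A] chain[OF A'] middle by blast+
    ultimately have "middle (chain A) = middle (chain A')"
      using inj_onD[OF bij_betw_imp_inj_on[OF g]] by blast
    then have "middle (chain A) \<in> chain_sets (chain A) \<inter> chain_sets (chain A')"
      using chain[OF A] chain[OF A'] middle by (metis IntI)
    then have "chain A = chain A'" using disj chain[OF A] chain[OF A'] by blast
    then show "A \<subseteq> A' \<or> A' \<subseteq> A"
      using chain_sets_comparable[of A "chain A" A'] chain[OF A] chain[OF A'] by simp
  qed
qed

section \<open>Cliques and colourings\<close>

lemma card_clique_le_colours:
  assumes "is_clique V E C" "proper_colouring V E k f"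
  shows "card C \<le> k"
proof -
  have "inj_on f C" "f ` C \<subseteq> {..<k}"
    using assms unfolding is_clique_def proper_colouring_def inj_on_def by blast+
  then show ?thesis using card_inj_on_le[of f C "{..<k}"] by simp
qed

lemma clique_number_chromatic_number_eqI:
  assumes "finite C" "is_clique V E C" "proper_colouring V E (card C) f"
  shows "clique_number V E = card C \<and> chromatic_number V E = card C"
proof
  show "clique_number V E = card C"
    unfolding clique_number_def
  proof (rule cSup_eq_maximum)
    show "card C \<in> {card D | D. finite D \<and> is_clique V E D}" using assms(1,2) by blast
  next
    fix n assume "n \<in> {card D | D. finite D \<and> is_clique V E D}"
    then show "n \<le> card C" using card_clique_le_colours assms(3) by blast
  qed
  show "chromatic_number V E = card C"
    unfolding chromatic_number_def
  proof (rule Least_equality)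
    show "\<exists>f. proper_colouring V E (card C) f" using assms(3) by blast
  next
    fix k assume "\<exists>f. proper_colouring V E k f"
    then show "card C \<le> k" using card_clique_le_colours assms(2) by blast
  qed
qed

section \<open>The ring of bit vectors\<close>

instance bit :: finite
proof
  have "(UNIV :: bit set) \<subseteq> {0, 1}" by auto
  then show "finite (UNIV :: bit set)" by (rule finite_subset) simp
qed

definition ones :: "bit ^ 'n \<Rightarrow> 'n set" where
  "ones x = {i. x $ i = 1}"

lemma ones_inject: "ones x = ones y \<longleftrightarrow> x = y"
proof
  assume "ones x = ones y"
  then have "x $ i = 1 \<longleftrightarrow> y $ i = 1" for i unfolding ones_def by blast
  then show "x = y" unfolding vec_eq_iff by (metis bit_not_one_iff)
qed simp

lemma ones_indicator: "ones (\<chi> i. if i \<in> A then 1 else 0) = A"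
  unfolding ones_def by auto

lemma ones_eq_empty_iff: "ones x = {} \<longleftrightarrow> x = 0"
  unfolding ones_def vec_eq_iff by auto

lemma ones_eq_UNIV_iff: "ones x = UNIV \<longleftrightarrow> x dvd 1"
proof
  assume "ones x = UNIV"
  then have "x = 1" unfolding ones_def vec_eq_iff by auto
  then show "x dvd 1" by simp
next
  assume "x dvd 1"
  then obtain r where r: "1 = x * r" by (elim dvdE)
  have "x $ i = 1" for i
  proof -
    have "x $ i * r $ i = 1" using arg_cong[OF r, of "\<lambda>v. v $ i"] by simp
    then show ?thesis by (cases "x $ i = 1") auto
  qed
  then show "ones x = UNIV" unfolding ones_def by blast
qed

lemma mem_principal_ideal_iff_ones_subset: "x \<in> {r * y | r. True} \<longleftrightarrow> ones x \<subseteq> ones y"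
proof
  assume "x \<in> {r * y | r. True}"
  then obtain r where "x = r * y" by blast
  then show "ones x \<subseteq> ones y" unfolding ones_def by auto
next
  assume "ones x \<subseteq> ones y"
  then have "x = x * y" unfolding ones_def vec_eq_iff by auto
  then show "x \<in> {r * y | r. True}" by blast
qed

lemma cozero_adj_iff_ones: "cozero_adj x y \<longleftrightarrow> \<not> ones x \<subseteq> ones y \<and> \<not> ones y \<subseteq> ones x"
  unfolding cozero_adj_def mem_principal_ideal_iff_ones_subset by blast

lemma nonzero_nonunits_iff_ones: "x \<in> nonzero_nonunits \<longleftrightarrow> ones x \<noteq> {} \<and> ones x \<noteq> UNIV"
  unfolding nonzero_nonunits_def mem_Collect_eq ones_eq_empty_iff ones_eq_UNIV_iff ..

lemma card_ones_layer: "card {x :: bit ^ 'n. card (ones x) = k} = CARD('n) choose k"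
proof -
  let ?Q = "{x :: bit ^ 'n. card (ones x) = k}"
  have "inj_on ones ?Q" by (rule inj_onI) (simp add: ones_inject)
  then have "card ?Q = card (ones ` ?Q)" by (simp add: card_image)
  also have "ones ` ?Q = {A. A \<subseteq> UNIV \<and> card A = k}"
  proof (intro equalityI subsetI)
    fix A assume "A \<in> {A. A \<subseteq> (UNIV :: 'n set) \<and> card A = k}"
    then show "A \<in> ones ` ?Q"
      by (intro rev_image_eqI[of "\<chi> i. if i \<in> A then 1 else 0"]) (simp_all add: ones_indicator)
  qed auto
  also have "card \<dots> = CARD('n) choose k" by (rule n_subsets) simp
  finally show ?thesis .
qed

lemma ones_layer_clique:
  assumes "0 < k" "k < CARD('n)"
  shows "is_clique nonzero_nonunits cozero_adj {x :: bit ^ 'n. card (ones x) = k}"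
proof -
  have "x \<in> nonzero_nonunits" if "card (ones x) = k" for x :: "bit ^ 'n"
    using that assms unfolding nonzero_nonunits_iff_ones by auto
  moreover have "cozero_adj x y" if "card (ones x) = k" "card (ones y) = k" "x \<noteq> y" for x y :: "bit ^ 'n"
  proof -
    have "ones x \<noteq> ones y" using that(3) ones_inject by blast
    then show ?thesis
      unfolding cozero_adj_iff_ones
      using card_subset_eq[OF finite, of "ones x" "ones y"] card_subset_eq[OF finite, of "ones y" "ones x"]
        that(1,2) by auto
  qed
  ultimately show ?thesis unfolding is_clique_def by blast
qed

lemma proper_colouring_ones:
  fixes col :: "'n::finite set \<Rightarrow> nat"
  assumes "\<And>A. col A < k" "\<And>A A'. col A = col A' \<Longrightarrow> A \<subseteq> A' \<or> A' \<subseteq> A"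
  shows "proper_colouring (nonzero_nonunits :: (bit ^ 'n) set) cozero_adj k (col \<circ> ones)"
  unfolding proper_colouring_def cozero_adj_iff_ones using assms by auto

theorem lemma2p5:
  assumes "CARD('n::finite) \<ge> 2"
  shows "clique_number (nonzero_nonunits :: (bit ^ 'n) set) cozero_adj
           = CARD('n) choose (CARD('n) div 2)
       \<and> chromatic_number (nonzero_nonunits :: (bit ^ 'n) set) cozero_adj
           = CARD('n) choose (CARD('n) div 2)"
proof -
  let ?Q = "{x :: bit ^ 'n. card (ones x) = CARD('n) div 2}"
  obtain col :: "'n set \<Rightarrow> nat" where
    "\<And>A. col A < CARD('n) choose (CARD('n) div 2)"
    "\<And>A A'. col A = col A' \<Longrightarrow> A \<subseteq> A' \<or> A' \<subseteq> A"
    using chain_colouring_exists[of "UNIV :: 'n set"] by auto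
  then have colouring: "proper_colouring nonzero_nonunits cozero_adj (card ?Q) (col \<circ> ones)"
    unfolding card_ones_layer by (rule proper_colouring_ones)
  have clique: "is_clique nonzero_nonunits cozero_adj ?Q"
    using assms by (intro ones_layer_clique) auto
  from clique_number_chromatic_number_eqI[OF finite clique colouring]
  show ?thesis unfolding card_ones_layer .
qed

end
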